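(* Let $n\ge 1$ and let $G_n$ be the graph consisting of two edges $e_l=(x_1,v_l)$ and $e_r=(x_2,v_r)$ connected by an $H_n$, where $x_1,x_2$ are distinct new vertices not in the $H_n$. Then $G_n$ is $(n+1)$-edge-colorable, but every edge coloring of $G_n$ in which $e_l$ and $e_r$ receive different colors uses at least $n+2$ colors.
   Context: For $n\ge1$, the graph $H_n$ consists of a complete bipartite graph $K_{n,n}$ with bipartition $(L,R)$, $|L|=|R|=n$, together with two further vertices $v_l,v_r$ and the edges $(v_l,v)$ for all $v\in L$ and $(v_r,v)$ for all $v\in R$; $v_l$ is its leftmost vertex and $v_r$ its rightmost vertex. Two edges $(x_1,y_1)$ and $(x_2,y_2)$ are connected by an $H_n$ if $y_1$ is the leftmost and $y_2$ the rightmost vertex of the same copy of $H_n$, and neither $x_1$ nor $x_2$ belongs to that copy. A graph is $k$-edge-colorable if it has a proper edge coloring with at most $k$ colors. *)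

theory Defs
  imports Main
begin

text \<open>Simple graphs are given by their edge sets: an edge is a two-element vertex set.\<close>

definition proper_edge_coloring :: "'v set set \<Rightarrow> ('v set \<Rightarrow> 'c) \<Rightarrow> bool" where
  "proper_edge_coloring E c \<longleftrightarrow>
     (\<forall>e\<in>E. \<forall>f\<in>E. e \<noteq> f \<and> e \<inter> f \<noteq> {} \<longrightarrow> c e \<noteq> c f)"

definition edge_colorable :: "'v set set \<Rightarrow> nat \<Rightarrow> bool" where
  "edge_colorable E k \<longleftrightarrow>
     (\<exists>c :: 'v set \<Rightarrow> nat. proper_edge_coloring E c \<and> card (c ` E) \<le> k)"

text \<open>Vertices of G_n: Lv i, Rv i (i < n) form L and R of K_{n,n};
Vl, Vr are the leftmost/rightmost vertices of H_n; X1, X2 are the new vertices.\<close>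

datatype vert = Lv nat | Rv nat | Vl | Vr | X1 | X2

definition H_edges :: "nat \<Rightarrow> vert set set" where
  "H_edges n =
     {{Lv i, Rv j} | i j. i < n \<and> j < n}
     \<union> {{Vl, Lv i} | i. i < n}
     \<union> {{Vr, Rv j} | j. j < n}"

definition e_l :: "vert set" where "e_l = {X1, Vl}"
definition e_r :: "vert set" where "e_r = {X2, Vr}"

definition G_edges :: "nat \<Rightarrow> vert set set" where
  "G_edges n = H_edges n \<union> {e_l, e_r}"

end

theory Submission
  imports Defs
begin

text \<open>
  Upper bound: label every vertex by a number below n+1 (Lv i and Rv i get i+1, all
  other vertices 0) and colour an edge by the sum of its endpoint labels modulo n+1.
  A general lemma shows that such a sum colouring is proper as soon as the neighbours
  of every vertex carry pairwise distinct labels; it uses at most n+1 colours.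

  Lower bound: suppose a proper colouring uses at most n+1 colours and let a be the
  colour of e_l. A general lemma says that n+1 edges through one vertex already show
  every colour. Each Lv i has degree n+1 and its edge to Vl meets e_l, so a appears on
  an edge Lv i -- Rv j. As the colour class of a is a matching, a pigeonhole lemma shows
  that a then appears at every Rv j on an edge of the K_{n,n}. But Vr also has degree
  n+1, so a appears on e_r or on some edge Vr -- Rv j; the first is excluded by
  c e_l ~= c e_r, the second by properness at Rv j. (The argument does not need n >= 1.)
\<close>

lemma proper_edge_coloringD:
  assumes "proper_edge_coloring E c" "e \<in> E" "f \<in> E" "e \<noteq> f" "x \<in> e" "x \<in> f"
  shows "c e \<noteq> c f"
  using assms unfolding proper_edge_coloring_def by blast

definition sum_colouring :: "('v \<Rightarrow> nat) \<Rightarrow> nat \<Rightarrow> 'v set \<Rightarrow> nat" where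
  "sum_colouring lab m e = (\<Sum>v\<in>e. lab v) mod m"

lemma sum_colouring_edge:
  assumes "u \<noteq> v"
  shows "sum_colouring lab m {u, v} = (lab u + lab v) mod m"
  using assms by (simp add: sum_colouring_def)

lemma sum_colouring_proper:
  assumes simple: "\<forall>e\<in>E. \<exists>u v. u \<noteq> v \<and> e = {u, v}"
    and distinct_labels:
      "\<And>w u u'. {w, u} \<in> E \<Longrightarrow> {w, u'} \<in> E \<Longrightarrow> u \<noteq> u' \<Longrightarrow> lab u \<noteq> lab u'"
    and bounded: "\<And>e v. e \<in> E \<Longrightarrow> v \<in> e \<Longrightarrow> lab v < m"
  shows "proper_edge_coloring E (sum_colouring lab m)"
  unfolding proper_edge_coloring_def
proof (intro ballI impI)
  fix e f assume e: "e \<in> E" and f: "f \<in> E" and ef: "e \<noteq> f \<and> e \<inter> f \<noteq> {}"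
  then obtain w where "w \<in> e" "w \<in> f" by blast
  have through_w: "\<exists>x. x \<noteq> w \<and> d = {w, x}" if "d \<in> E" "w \<in> d" for d
    using simple that by fastforce
  obtain u u' where u: "u \<noteq> w" "e = {w, u}" and u': "u' \<noteq> w" "f = {w, u'}"
    using through_w[OF e \<open>w \<in> e\<close>] through_w[OF f \<open>w \<in> f\<close>] by blast
  have "lab u \<noteq> lab u'" using distinct_labels e f ef u u' by blast
  moreover have "lab u < m" "lab u' < m" using bounded e f u u' by auto
  ultimately have "lab u mod m \<noteq> lab u' mod m" by simp
  then have "(lab w + lab u) mod m \<noteq> (lab w + lab u') mod m"
    by (simp add: nat_mod_eq_iff)
  then show "sum_colouring lab m e \<noteq> sum_colouring lab m f"
    using u u' by (simp add: sum_colouring_edge)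
qed

lemma sum_colouring_few_colours:
  assumes "0 < m"
  shows "card (sum_colouring lab m ` E) \<le> m"
proof -
  have "sum_colouring lab m ` E \<subseteq> {..<m}"
    using assms by (auto simp: sum_colouring_def)
  then show ?thesis by (metis card_lessThan card_mono finite_lessThan)
qed

text \<open>Edges through a common vertex get distinct colours; so if there are at least as
  many of them as colours in total, every colour occurs among them.\<close>

lemma star_shows_all_colours:
  assumes "finite E" "proper_edge_coloring E c" "S \<subseteq> E" "\<And>e. e \<in> S \<Longrightarrow> v \<in> e"
    and "card (c ` E) \<le> card S"
  shows "c ` S = c ` E"
proof -
  have "inj_on c S"
    using assms(2-4) by (auto intro!: inj_onI dest: proper_edge_coloringD)
  then have "card (c ` S) = card S" by (rule card_image)
  moreover have "c ` S \<subseteq> c ` E" using assms(3) by blast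
  ultimately show ?thesis using assms(1,5) by (metis card_seteq finite_imageI)
qed

lemma injective_total_relation_onto:
  assumes "finite A" "\<forall>x\<in>A. \<exists>y\<in>A. R x y"
    and injective:
      "\<And>x x' y. x \<in> A \<Longrightarrow> x' \<in> A \<Longrightarrow> y \<in> A \<Longrightarrow> R x y \<Longrightarrow> R x' y \<Longrightarrow> x = x'"
    and "y \<in> A"
  shows "\<exists>x\<in>A. R x y"
proof -
  obtain f where f: "\<forall>x\<in>A. f x \<in> A \<and> R x (f x)" using assms(2) by metis
  have "inj_on f A" using f injective by (metis inj_onI)
  then have "f ` A = A" using endo_inj_surj[OF assms(1)] f by blast
  then show ?thesis using f \<open>y \<in> A\<close> by (metis imageE)
qed

lemma G_edges_finite: "finite (G_edges n)"
proof -
  have "H_edges n = (\<lambda>(i, j). {Lv i, Rv j}) ` ({..<n} \<times> {..<n})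
      \<union> (\<lambda>i. {Vl, Lv i}) ` {..<n} \<union> (\<lambda>j. {Vr, Rv j}) ` {..<n}"
    unfolding H_edges_def by auto
  then show ?thesis unfolding G_edges_def by simp
qed

lemma G_edges_simple: "\<forall>e\<in>G_edges n. \<exists>u v. u \<noteq> v \<and> e = {u, v}"
  unfolding G_edges_def H_edges_def e_l_def e_r_def by blast

lemma G_edges_members:
  "i < n \<Longrightarrow> j < n \<Longrightarrow> {Lv i, Rv j} \<in> G_edges n"
  "i < n \<Longrightarrow> {Vl, Lv i} \<in> G_edges n"
  "j < n \<Longrightarrow> {Vr, Rv j} \<in> G_edges n"
  "e_l \<in> G_edges n" "e_r \<in> G_edges n"
  unfolding G_edges_def H_edges_def by blast+

fun vertex_label :: "vert \<Rightarrow> nat" where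
  "vertex_label (Lv i) = Suc i"
| "vertex_label (Rv j) = Suc j"
| "vertex_label _ = 0"

text \<open>Neighbours of one vertex have distinct labels: the neighbours of Vl are X1 (label 0)
  and the Lv i (labels 1..n), those of Lv i are Vl (label 0) and the Rv j (labels 1..n),
  and symmetrically on the right.\<close>

lemma G_distinct_labels:
  assumes "{w, u} \<in> G_edges n" "{w, u'} \<in> G_edges n" "u \<noteq> u'"
  shows "vertex_label u \<noteq> vertex_label u'"
  using assms unfolding G_edges_def H_edges_def e_l_def e_r_def
  by (auto simp: doubleton_eq_iff)

lemma G_labels_bounded: "e \<in> G_edges n \<Longrightarrow> v \<in> e \<Longrightarrow> vertex_label v < n + 1"
  unfolding G_edges_def H_edges_def e_l_def e_r_def by auto

lemma G_colourable: "edge_colorable (G_edges n) (n + 1)"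
proof -
  have "proper_edge_coloring (G_edges n) (sum_colouring vertex_label (n + 1))"
    by (rule sum_colouring_proper[OF G_edges_simple G_distinct_labels G_labels_bounded])
  moreover have "card (sum_colouring vertex_label (n + 1) ` G_edges n) \<le> n + 1"
    by (rule sum_colouring_few_colours) simp
  ultimately show ?thesis unfolding edge_colorable_def by blast
qed

lemma left_star:
  assumes "i < n"
  shows "insert {Vl, Lv i} ((\<lambda>j. {Lv i, Rv j}) ` {..<n}) \<subseteq> G_edges n"
    and "card (insert {Vl, Lv i} ((\<lambda>j. {Lv i, Rv j}) ` {..<n})) = n + 1"
proof -
  show "insert {Vl, Lv i} ((\<lambda>j. {Lv i, Rv j}) ` {..<n}) \<subseteq> G_edges n"
    using assms G_edges_members by auto
  have "inj_on (\<lambda>j. {Lv i, Rv j}) {..<n}" by (auto intro!: inj_onI simp: doubleton_eq_iff)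
  moreover have "{Vl, Lv i} \<notin> (\<lambda>j. {Lv i, Rv j}) ` {..<n}" by (auto simp: doubleton_eq_iff)
  ultimately show "card (insert {Vl, Lv i} ((\<lambda>j. {Lv i, Rv j}) ` {..<n})) = n + 1"
    by (simp add: card_image)
qed

lemma right_star:
  shows "insert e_r ((\<lambda>j. {Vr, Rv j}) ` {..<n}) \<subseteq> G_edges n"
    and "card (insert e_r ((\<lambda>j. {Vr, Rv j}) ` {..<n})) = n + 1"
proof -
  show "insert e_r ((\<lambda>j. {Vr, Rv j}) ` {..<n}) \<subseteq> G_edges n"
    using G_edges_members by auto
  have "inj_on (\<lambda>j. {Vr, Rv j}) {..<n}" by (auto intro!: inj_onI simp: doubleton_eq_iff)
  moreover have "e_r \<notin> (\<lambda>j. {Vr, Rv j}) ` {..<n}" by (auto simp: doubleton_eq_iff e_r_def)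
  ultimately show "card (insert e_r ((\<lambda>j. {Vr, Rv j}) ` {..<n})) = n + 1"
    by (simp add: card_image)
qed

lemma G_needs_extra_colour:
  assumes proper: "proper_edge_coloring (G_edges n) c" and distinct_ends: "c e_l \<noteq> c e_r"
  shows "n + 2 \<le> card (c ` G_edges n)"
proof (rule ccontr)
  assume "\<not> ?thesis"
  then have few: "card (c ` G_edges n) \<le> n + 1" by simp
  define a where "a = c e_l"
  have a_used: "a \<in> c ` G_edges n" unfolding a_def using G_edges_members by blast
  have at_left: "\<forall>i\<in>{..<n}. \<exists>j\<in>{..<n}. c {Lv i, Rv j} = a"
  proof
    fix i assume "i \<in> {..<n}"
    then have i: "i < n" by simp
    have "c ` insert {Vl, Lv i} ((\<lambda>j. {Lv i, Rv j}) ` {..<n}) = c ` G_edges n"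
      by (rule star_shows_all_colours[OF G_edges_finite proper left_star(1)[OF i], of "Lv i"])
        (use few left_star(2)[OF i] in auto)
    then have "a \<in> c ` insert {Vl, Lv i} ((\<lambda>j. {Lv i, Rv j}) ` {..<n})"
      using a_used by simp
    moreover have "c {Vl, Lv i} \<noteq> a"
      unfolding a_def using proper_edge_coloringD[OF proper G_edges_members(2)[OF i]
          G_edges_members(4), of Vl] by (auto simp: e_l_def)
    ultimately show "\<exists>j\<in>{..<n}. c {Lv i, Rv j} = a" by auto
  qed
  have matching: "i = k"
    if "i \<in> {..<n}" "k \<in> {..<n}" "j \<in> {..<n}" "c {Lv i, Rv j} = a" "c {Lv k, Rv j} = a"
    for i k j
  proof (rule ccontr)
    assume "i \<noteq> k"
    then have "c {Lv i, Rv j} \<noteq> c {Lv k, Rv j}"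
      using that by (intro proper_edge_coloringD[OF proper, of _ _ "Rv j"])
        (auto simp: G_edges_members doubleton_eq_iff)
    with that show False by simp
  qed
  have at_right: "\<exists>i\<in>{..<n}. c {Lv i, Rv j} = a" if "j \<in> {..<n}" for j
    using injective_total_relation_onto[OF finite_lessThan at_left matching that] .
  have "c ` insert e_r ((\<lambda>j. {Vr, Rv j}) ` {..<n}) = c ` G_edges n"
    by (rule star_shows_all_colours[OF G_edges_finite proper right_star(1), of Vr])
      (use few right_star(2) in \<open>auto simp: e_r_def\<close>)
  then have "a \<in> c ` (\<lambda>j. {Vr, Rv j}) ` {..<n}"
    using a_used distinct_ends unfolding a_def by auto
  then obtain j where j: "j < n" "c {Vr, Rv j} = a" by auto
  then obtain i where i: "i < n" "c {Lv i, Rv j} = a" using at_right by blast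
  have "c {Lv i, Rv j} \<noteq> c {Vr, Rv j}"
    using i j by (intro proper_edge_coloringD[OF proper, of _ _ "Rv j"])
      (auto simp: G_edges_members doubleton_eq_iff)
  with i j show False by simp
qed

theorem lemma2:
  fixes n :: nat
  assumes "n \<ge> 1"
  shows "edge_colorable (G_edges n) (n + 1)
    \<and> (\<forall>c :: vert set \<Rightarrow> 'c. proper_edge_coloring (G_edges n) c \<and> c e_l \<noteq> c e_r
          \<longrightarrow> card (c ` G_edges n) \<ge> n + 2)"
  using G_colourable G_needs_extra_colour by auto

end
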